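(* Let $n$ and $0<n_1<\cdots<n_d<n$ be integers with $m_1=n_1$, $m_k=n_k-n_{k-1}$ ($2\le k\le d$), $m_{d+1}=n-n_d$, and equip $\mathrm{Flag}(n_1,\dots,n_d;n)=\{(VJ_1V^{\mathsf T},\dots,VJ_dV^{\mathsf T}):V\in\mathrm{O}(n)\}\subseteq(\mathbb{R}^{n\times n})^d$ with the metric induced by the Frobenius inner product. Let $V(t)$ be a differentiable curve in $\mathrm{O}(n)$ with $\Lambda(t)=V(t)^{\mathsf T}\dot V(t)$, $\Lambda(k,k)\equiv0$ ($k=1,\dots,d+1$), and $c(t)=V(t)(J_1,\dots,J_d)V(t)^{\mathsf T}$. Let $Y(t)=V(t)\big(X(t)J_1-J_1X(t),\dots,X(t)J_d-J_dX(t)\big)V(t)^{\mathsf T}$ be a vector field along $c$, with $X(t)\in\mathfrak{so}(n)$ differentiable and $X(k,k)\equiv0$. Then $Y$ is parallel along $c$ if and only if for every $1\le k<q\le d+1$, \[ -2\dot X(k,q)+\sum_{\substack{1\le s\le d+1\\ s\ne k,q}}\big(X(k,s)\Lambda(s,q)-\Lambda(k,s)X(s,q)\big)+\delta_{q,d+1}\sum_{\substack{1\le l\le d\\ l\ne k}}\big(X(k,l)\Lambda(l,d+1)+\Lambda(k,l)X(l,d+1)\big)=0, \] equivalently \[ 2\dot X=\pi([X,\Lambda])+\begin{bmatrix}0&X_0\Lambda_1+\Lambda_0X_1\\-(X_0\Lambda_1+\Lambda_0X_1)^{\mathsf T}&0\end{bmatrix}, \] where $X=\begin{bmatrix}X_0&X_1\\-X_1^{\mathsf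 T}&0\end{bmatrix}$, $\Lambda=\begin{bmatrix}\Lambda_0&\Lambda_1\\-\Lambda_1^{\mathsf T}&0\end{bmatrix}$ with $X_0,\Lambda_0\in\mathbb{R}^{(n-m_{d+1})\times(n-m_{d+1})}$, $X_1,\Lambda_1\in\mathbb{R}^{(n-m_{d+1})\times m_{d+1}}$.
   Context: $J_k=\operatorname{diag}(-I_{m_1},\dots,-I_{m_{k-1}},I_{m_k},-I_{m_{k+1}},\dots,-I_{m_{d+1}})$. $V(X_1,\dots,X_d)V^{\mathsf T}$ denotes $(VX_1V^{\mathsf T},\dots,VX_dV^{\mathsf T})$. For an $n\times n$ matrix $M$, $M(p,q)$ denotes its $(p,q)$ block in the partition $n=m_1+\cdots+m_{d+1}$; $\delta$ is the Kronecker delta; $[X,\Lambda]=X\Lambda-\Lambda X$; for $M\in\mathfrak{so}(n)$, $\pi(M)$ is obtained from $M$ by setting all diagonal blocks $M(p,p)$ to zero. $Y$ is parallel along $c$ iff the orthogonal projection of $\dot Y(t)$ onto $\mathbb{T}_{c(t)}\mathrm{Flag}$ vanishes for all $t$. *)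

theory Defs
  imports "HOL-Analysis.Analysis"
begin

text \<open>Matrices of size n x n are represented as functions nat => nat => real; only
  entries with indices < n are meaningful. A d-tuple of matrices is a function
  nat => (nat => nat => real), meaningful on components 1..d.\<close>

type_synonym mat = "nat \<Rightarrow> nat \<Rightarrow> real"
type_synonym mtup = "nat \<Rightarrow> mat"

definition mmul :: "nat \<Rightarrow> mat \<Rightarrow> mat \<Rightarrow> mat" where
  "mmul n A B = (\<lambda>i j. \<Sum>r<n. A i r * B r j)"

definition mtr :: "mat \<Rightarrow> mat" where
  "mtr A = (\<lambda>i j. A j i)"

definition orthogonal_mat :: "nat \<Rightarrow> mat \<Rightarrow> bool" where
  "orthogonal_mat n V \<longleftrightarrow> (\<forall>i<n. \<forall>j<n. mmul n (mtr V) V i j = (if i = j then 1 else 0))"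

definition skew_mat :: "nat \<Rightarrow> mat \<Rightarrow> bool" where
  "skew_mat n X \<longleftrightarrow> (\<forall>i<n. \<forall>j<n. X i j = - X j i)"

text \<open>Block boundaries: n_0 = 0, n_k = ns k (1 <= k <= d), n_(d+1) = n.
  Block k (1 <= k <= d+1) consists of the indices n_(k-1) .. n_k - 1.\<close>

definition bnd :: "(nat \<Rightarrow> nat) \<Rightarrow> nat \<Rightarrow> nat \<Rightarrow> nat \<Rightarrow> nat" where
  "bnd ns d n k = (if k = 0 then 0 else if k \<le> d then ns k else n)"

definition blk :: "(nat \<Rightarrow> nat) \<Rightarrow> nat \<Rightarrow> nat \<Rightarrow> nat \<Rightarrow> nat set" where
  "blk ns d n k = {bnd ns d n (k - 1) ..< bnd ns d n k}"

definition Jmat :: "(nat \<Rightarrow> nat) \<Rightarrow> nat \<Rightarrow> nat \<Rightarrow> nat \<Rightarrow> mat" where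
  "Jmat ns d n k = (\<lambda>i j. if i = j then (if i \<in> blk ns d n k then 1 else -1) else 0)"

definition tup_eq :: "nat \<Rightarrow> nat \<Rightarrow> mtup \<Rightarrow> mtup \<Rightarrow> bool" where
  "tup_eq n d A B \<longleftrightarrow> (\<forall>k\<in>{1..d}. \<forall>i<n. \<forall>j<n. A k i j = B k i j)"

definition frob :: "nat \<Rightarrow> nat \<Rightarrow> mtup \<Rightarrow> mtup \<Rightarrow> real" where
  "frob n d A B = (\<Sum>k\<in>{1..d}. \<Sum>i<n. \<Sum>j<n. A k i j * B k i j)"

definition Flag :: "(nat \<Rightarrow> nat) \<Rightarrow> nat \<Rightarrow> nat \<Rightarrow> mtup set" where
  "Flag ns d n = {A. \<exists>V. orthogonal_mat n V \<and>
      tup_eq n d A (\<lambda>k. mmul n (mmul n V (Jmat ns d n k)) (mtr V))}"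

definition mat_deriv :: "nat \<Rightarrow> (real \<Rightarrow> mat) \<Rightarrow> mat \<Rightarrow> real \<Rightarrow> bool" where
  "mat_deriv n M D t \<longleftrightarrow> (\<forall>i<n. \<forall>j<n. ((\<lambda>s. M s i j) has_real_derivative D i j) (at t))"

definition tup_deriv :: "nat \<Rightarrow> nat \<Rightarrow> (real \<Rightarrow> mtup) \<Rightarrow> mtup \<Rightarrow> real \<Rightarrow> bool" where
  "tup_deriv n d M D t \<longleftrightarrow>
     (\<forall>k\<in>{1..d}. \<forall>i<n. \<forall>j<n. ((\<lambda>s. M s k i j) has_real_derivative D k i j) (at t))"

definition flag_tangent :: "(nat \<Rightarrow> nat) \<Rightarrow> nat \<Rightarrow> nat \<Rightarrow> mtup \<Rightarrow> mtup set" where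
  "flag_tangent ns d n p = {W. \<exists>\<gamma> \<Gamma>. (\<forall>s. \<gamma> s \<in> Flag ns d n) \<and> tup_eq n d (\<gamma> 0) p \<and>
      (\<forall>s. tup_deriv n d \<gamma> (\<Gamma> s) s) \<and> tup_eq n d W (\<Gamma> 0)}"

text \<open>Y is parallel along c iff for all t the orthogonal projection of dY/dt onto
  the tangent space at c(t) vanishes, i.e. dY/dt is Frobenius-orthogonal to it.\<close>
definition parallel_along :: "(nat \<Rightarrow> nat) \<Rightarrow> nat \<Rightarrow> nat \<Rightarrow> (real \<Rightarrow> mtup) \<Rightarrow> (real \<Rightarrow> mtup) \<Rightarrow> bool" where
  "parallel_along ns d n c Y \<longleftrightarrow>
     (\<forall>t. \<exists>D. tup_deriv n d Y D t \<and> (\<forall>W\<in>flag_tangent ns d n (c t). frob n d D W = 0))"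

end

theory Submission
  imports Defs "Jordan_Normal_Form.Determinant" "HOL-Library.Function_Algebras"
begin

text \<open>Tangent vectors of \<open>Flag\<close> at \<open>U J U\<^sup>T\<close> are exactly the tuples
  \<open>U [\<Omega>, J\<^sub>k] U\<^sup>T\<close> with \<open>\<Omega>\<close> skew-symmetric: differentiating
  \<open>J\<^sub>k\<^sup>T = J\<^sub>k\<close>, \<open>J\<^sub>k J\<^sub>l = J\<^sub>l J\<^sub>k\<close> and \<open>J\<^sub>k\<^sup>2 = I\<close> forces this form, and
  plane rotations realise every elementary skew \<open>\<Omega>\<close>. In the frame \<open>V(t)\<close> the derivative
  of \<open>Y\<^sub>k\<close> is \<open>[\<Lambda>, [X, J\<^sub>k]] + [X', J\<^sub>k]\<close>, so its Frobenius pairing with such a tangent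
  vector is \<open>\<Sum> \<Omega>\<^sub>i\<^sub>j G\<^sub>i\<^sub>j\<close> for an explicit matrix \<open>G\<close>; hence \<open>Y\<close> is parallel iff \<open>G\<close>
  is symmetric off the diagonal blocks. As \<open>X\<close> and \<open>\<Lambda>\<close> vanish on the diagonal blocks,
  \<open>G\<^sub>i\<^sub>j - G\<^sub>j\<^sub>i\<close> is a nonzero multiple of \<open>2 X'\<^sub>i\<^sub>j\<close> minus the claimed right-hand side;
  read off for \<open>i, j\<close> in blocks \<open>k < q\<close>, this is the blockwise form.\<close>

hide_const (open) Matrix.orthogonal_mat Matrix.mat
hide_type (open) Matrix.mat

text \<open>Only entries below \<open>n\<close> are meaningful, so identities such as
  \<open>mmul n idm A = A\<close> hold only up to \<open>mat_eq n\<close>.\<close>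

definition mat_eq :: "nat \<Rightarrow> mat \<Rightarrow> mat \<Rightarrow> bool" where
  "mat_eq n A B \<longleftrightarrow> (\<forall>i<n. \<forall>j<n. A i j = B i j)"

definition idm :: mat where
  "idm = (\<lambda>i j. if i = j then 1 else 0)"

lemma mat_eq_refl [simp]: "mat_eq n A A"
  by (simp add: mat_eq_def)

lemma mat_eq_sym: "mat_eq n A B \<Longrightarrow> mat_eq n B A"
  by (simp add: mat_eq_def)

lemma mat_eq_trans [trans]: "mat_eq n A B \<Longrightarrow> mat_eq n B C \<Longrightarrow> mat_eq n A C"
  by (simp add: mat_eq_def)

lemma mat_eq_eq_trans [trans]: "mat_eq n A B \<Longrightarrow> B = C \<Longrightarrow> mat_eq n A C"
  by simp

lemma eq_mat_eq_trans [trans]: "A = B \<Longrightarrow> mat_eq n B C \<Longrightarrow> mat_eq n A C"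
  by simp

lemma mat_eqD: "mat_eq n A B \<Longrightarrow> i < n \<Longrightarrow> j < n \<Longrightarrow> A i j = B i j"
  by (simp add: mat_eq_def)

lemma mat_eq_add: "mat_eq n A A' \<Longrightarrow> mat_eq n B B' \<Longrightarrow> mat_eq n (A + B) (A' + B')"
  by (simp add: mat_eq_def)

lemma mat_eq_mtr: "mat_eq n A A' \<Longrightarrow> mat_eq n (mtr A) (mtr A')"
  by (simp add: mat_eq_def mtr_def)

lemma mat_eq_mmul: "mat_eq n A A' \<Longrightarrow> mat_eq n B B' \<Longrightarrow> mat_eq n (mmul n A B) (mmul n A' B')"
  unfolding mat_eq_def mmul_def by (auto intro!: sum.cong)

lemma mmul_assoc: "mmul n (mmul n A B) C = mmul n A (mmul n B C)"
proof (intro ext)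
  fix i j
  have "mmul n (mmul n A B) C i j = (\<Sum>r<n. \<Sum>u<n. A i u * B u r * C r j)"
    unfolding mmul_def by (simp add: sum_distrib_right)
  also have "\<dots> = (\<Sum>u<n. \<Sum>r<n. A i u * B u r * C r j)"
    by (rule sum.swap)
  also have "\<dots> = mmul n A (mmul n B C) i j"
    unfolding mmul_def by (simp add: sum_distrib_left mult.assoc)
  finally show "mmul n (mmul n A B) C i j = mmul n A (mmul n B C) i j" .
qed

lemma mmul_add_left: "mmul n (A + B) C = mmul n A C + mmul n B C"
  unfolding mmul_def by (simp add: fun_eq_iff distrib_right sum.distrib)

lemma mmul_add_right: "mmul n C (A + B) = mmul n C A + mmul n C B"
  unfolding mmul_def by (simp add: fun_eq_iff distrib_left sum.distrib)

lemma mmul_zero_left [simp]: "mmul n 0 C = 0"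
  by (simp add: mmul_def fun_eq_iff)

lemma mmul_zero_right [simp]: "mmul n C 0 = 0"
  by (simp add: mmul_def fun_eq_iff)

lemma mtr_mtr [simp]: "mtr (mtr A) = A"
  by (simp add: mtr_def)

lemma mtr_mmul: "mtr (mmul n A B) = mmul n (mtr B) (mtr A)"
  unfolding mmul_def mtr_def by (simp add: fun_eq_iff mult.commute)

lemma mmul_idm_left: "i < n \<Longrightarrow> mmul n idm A i j = A i j"
  unfolding mmul_def idm_def
  by (simp add: if_distrib[where f = "\<lambda>x. x * _"] sum.delta cong: if_cong)

lemma mmul_idm_right: "j < n \<Longrightarrow> mmul n A idm i j = A i j"
  unfolding mmul_def idm_def
  by (simp add: if_distrib[where f = "\<lambda>x. _ * x"] sum.delta' cong: if_cong)

lemma mat_eq_mmul_idm_left: "mat_eq n (mmul n idm A) A"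
  by (simp add: mat_eq_def mmul_idm_left)

lemma mat_eq_mmul_idm_right: "mat_eq n (mmul n A idm) A"
  by (simp add: mat_eq_def mmul_idm_right)

lemma orthogonal_mat_left: "orthogonal_mat n U \<Longrightarrow> mat_eq n (mmul n (mtr U) U) idm"
  unfolding Defs.orthogonal_mat_def mat_eq_def idm_def by auto

lemma orthogonal_mat_right_entry:
  assumes "orthogonal_mat n U" "i < n" "j < n"
  shows "mmul n U (mtr U) i j = idm i j"
proof -
  define A where "A = Matrix.mat n n (\<lambda>(i, j). U j i)"
  define B where "B = Matrix.mat n n (\<lambda>(i, j). U i j)"
  have "A * B = 1\<^sub>m n"
    using assms(1) unfolding Defs.orthogonal_mat_def mmul_def mtr_def
    by (auto simp: A_def B_def scalar_prod_def row_def col_def atLeast0LessThan intro!: eq_matI)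
  then have "B * A = 1\<^sub>m n"
    by (rule mat_mult_left_right_inverse[rotated 2]) (auto simp: A_def B_def)
  then have "(B * A) $$ (i, j) = 1\<^sub>m n $$ (i, j)"
    by simp
  with assms(2,3) show ?thesis
    by (simp add: A_def B_def idm_def scalar_prod_def row_def col_def mmul_def mtr_def
        atLeast0LessThan)
qed

lemma orthogonal_mat_right: "orthogonal_mat n U \<Longrightarrow> mat_eq n (mmul n U (mtr U)) idm"
  by (simp add: mat_eq_def orthogonal_mat_right_entry)

lemma orthogonal_mat_cancel_left:
  assumes "orthogonal_mat n U"
  shows "mat_eq n (mmul n (mtr U) (mmul n U A)) A"
proof -
  have "mmul n (mtr U) (mmul n U A) = mmul n (mmul n (mtr U) U) A"
    by (simp add: mmul_assoc)
  also have "mat_eq n \<dots> (mmul n idm A)"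
    by (intro mat_eq_mmul orthogonal_mat_left assms mat_eq_refl)
  also have "mat_eq n \<dots> A"
    by (rule mat_eq_mmul_idm_left)
  finally show ?thesis .
qed

lemma orthogonal_mat_cancel_right:
  assumes "orthogonal_mat n U"
  shows "mat_eq n (mmul n A (mmul n (mtr U) U)) A"
  using mat_eq_trans[OF mat_eq_mmul[OF mat_eq_refl orthogonal_mat_left[OF assms]]
      mat_eq_mmul_idm_right] .

lemma orthogonal_mat_mmul:
  assumes "orthogonal_mat n U" "orthogonal_mat n R"
  shows "orthogonal_mat n (mmul n U R)"
proof -
  have "mmul n (mtr (mmul n U R)) (mmul n U R) = mmul n (mtr R) (mmul n (mtr U) (mmul n U R))"
    by (simp add: mtr_mmul mmul_assoc)
  also have "mat_eq n \<dots> (mmul n (mtr R) R)"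
    by (intro mat_eq_mmul mat_eq_refl orthogonal_mat_cancel_left assms(1))
  finally have "mat_eq n (mmul n (mtr (mmul n U R)) (mmul n U R)) (mmul n (mtr R) R)" .
  with assms(2) show ?thesis
    unfolding Defs.orthogonal_mat_def mat_eq_def by auto
qed

lemma orthogonal_mat_conj_mmul:
  assumes "orthogonal_mat n V"
  shows "mat_eq n (mmul n (mmul n (mmul n V A) (mtr V)) (mmul n (mmul n V B) (mtr V)))
    (mmul n (mmul n V (mmul n A B)) (mtr V))"
proof -
  have "mmul n (mmul n (mmul n V A) (mtr V)) (mmul n (mmul n V B) (mtr V))
      = mmul n V (mmul n A (mmul n (mmul n (mtr V) V) (mmul n B (mtr V))))"
    by (simp add: mmul_assoc)
  also have "mat_eq n \<dots> (mmul n V (mmul n A (mmul n idm (mmul n B (mtr V)))))"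
    by (intro mat_eq_mmul mat_eq_refl orthogonal_mat_left assms)
  also have "mat_eq n \<dots> (mmul n V (mmul n A (mmul n B (mtr V))))"
    by (intro mat_eq_mmul mat_eq_refl mat_eq_mmul_idm_left)
  also have "\<dots> = mmul n (mmul n V (mmul n A B)) (mtr V)"
    by (simp add: mmul_assoc)
  finally show ?thesis .
qed

lemma sum_skew_mult_sym:
  assumes "skew_mat n \<Omega>" "\<And>i j. i < n \<Longrightarrow> j < n \<Longrightarrow> G i j = G j i"
  shows "(\<Sum>i<n. \<Sum>j<n. \<Omega> i j * G i j) = 0"
proof -
  have swap: "\<Omega> i j * G i j = - (\<Omega> j i * G j i)" if "i < n" "j < n" for i j
  proof -
    have "\<Omega> i j = - \<Omega> j i"
      using assms(1) that unfolding skew_mat_def by blast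
    then show ?thesis
      using assms(2)[OF that] by simp
  qed
  define S where "S = (\<Sum>i<n. \<Sum>j<n. \<Omega> i j * G i j)"
  have "S = (\<Sum>j<n. \<Sum>i<n. \<Omega> i j * G i j)"
    unfolding S_def by (rule sum.swap)
  also have "\<dots> = - S"
    unfolding S_def sum_negf[symmetric] by (intro sum.cong refl swap) auto
  finally show ?thesis
    unfolding S_def by simp
qed

definition in_frame :: "nat \<Rightarrow> mat \<Rightarrow> mat \<Rightarrow> mat" where
  "in_frame n U M = mmul n (mmul n (mtr U) M) U"

lemma in_frame_add: "in_frame n U (M + M') = in_frame n U M + in_frame n U M'"
  by (simp add: in_frame_def mmul_add_left mmul_add_right)

lemma in_frame_zero [simp]: "in_frame n U 0 = 0"
  by (simp add: in_frame_def)

lemma in_frame_cong: "mat_eq n M M' \<Longrightarrow> mat_eq n (in_frame n U M) (in_frame n U M')"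
  unfolding in_frame_def by (intro mat_eq_mmul mat_eq_refl)

lemma mtr_in_frame: "mtr (in_frame n U M) = in_frame n U (mtr M)"
  by (simp add: in_frame_def mtr_mmul mmul_assoc)

lemma in_frame_mmul_conj_right:
  assumes "orthogonal_mat n U"
  shows "mat_eq n (in_frame n U (mmul n A (mmul n (mmul n U P) (mtr U)))) (mmul n (in_frame n U A) P)"
proof -
  have "in_frame n U (mmul n A (mmul n (mmul n U P) (mtr U)))
      = mmul n (in_frame n U A) (mmul n P (mmul n (mtr U) U))"
    by (simp add: in_frame_def mmul_assoc)
  also have "mat_eq n \<dots> (mmul n (in_frame n U A) P)"
    by (intro mat_eq_mmul mat_eq_refl orthogonal_mat_cancel_right assms)
  finally show ?thesis .
qed

lemma in_frame_mmul_conj_left: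
  assumes "orthogonal_mat n U"
  shows "mat_eq n (in_frame n U (mmul n (mmul n (mmul n U P) (mtr U)) A)) (mmul n P (in_frame n U A))"
proof -
  have "in_frame n U (mmul n (mmul n (mmul n U P) (mtr U)) A)
      = mmul n (mtr U) (mmul n U (mmul n P (in_frame n U A)))"
    by (simp add: in_frame_def mmul_assoc)
  also have "mat_eq n \<dots> (mmul n P (in_frame n U A))"
    by (rule orthogonal_mat_cancel_left[OF assms])
  finally show ?thesis .
qed

definition mtrace :: "nat \<Rightarrow> mat \<Rightarrow> real" where
  "mtrace n M = (\<Sum>i<n. M i i)"

lemma frobenius_eq_mtrace: "(\<Sum>i<n. \<Sum>j<n. A i j * B i j) = mtrace n (mmul n A (mtr B))"
  by (simp add: mtrace_def mmul_def mtr_def)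

lemma mtrace_cong: "mat_eq n A B \<Longrightarrow> mtrace n A = mtrace n B"
  by (simp add: mtrace_def mat_eq_def)

lemma mtrace_mmul_commute: "mtrace n (mmul n A B) = mtrace n (mmul n B A)"
  unfolding mtrace_def mmul_def by (subst sum.swap) (simp add: mult.commute)

lemma frobenius_in_frame:
  assumes "orthogonal_mat n U"
  shows "(\<Sum>i<n. \<Sum>j<n. in_frame n U P i j * in_frame n U Q i j) = (\<Sum>i<n. \<Sum>j<n. P i j * Q i j)"
proof -
  have "(\<Sum>i<n. \<Sum>j<n. in_frame n U P i j * in_frame n U Q i j)
      = mtrace n (mmul n (mtr U) (mmul n P (mmul n (mmul n U (mtr U)) (mmul n (mtr Q) U))))"
    by (simp add: frobenius_eq_mtrace in_frame_def mtr_mmul mmul_assoc)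
  also have "\<dots> = mtrace n (mmul n P (mmul n (mmul n U (mtr U)) (mmul n (mtr Q) (mmul n U (mtr U)))))"
    by (subst mtrace_mmul_commute) (simp add: mmul_assoc)
  also have "\<dots> = mtrace n (mmul n P (mmul n idm (mmul n (mtr Q) idm)))"
    by (intro mtrace_cong mat_eq_mmul mat_eq_refl orthogonal_mat_right assms)
  also have "\<dots> = mtrace n (mmul n P (mtr Q))"
    by (intro mtrace_cong mat_eq_mmul mat_eq_refl mat_eq_trans[OF mat_eq_mmul_idm_left mat_eq_mmul_idm_right])
  finally show ?thesis
    by (simp add: frobenius_eq_mtrace)
qed

lemma mat_deriv_mmul:
  assumes "mat_deriv n A A' t" "mat_deriv n B B' t"
  shows "mat_deriv n (\<lambda>s. mmul n (A s) (B s)) (mmul n A' (B t) + mmul n (A t) B') t"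
  unfolding mat_deriv_def
proof (intro allI impI)
  fix i j assume "i < n" "j < n"
  with assms have "((\<lambda>s. A s i r * B s r j) has_real_derivative A' i r * B t r j + A t i r * B' r j) (at t)"
    if "r < n" for r
    using that unfolding mat_deriv_def by (auto intro!: derivative_eq_intros)
  then have "((\<lambda>s. \<Sum>r<n. A s i r * B s r j) has_real_derivative (\<Sum>r<n. A' i r * B t r j + A t i r * B' r j)) (at t)"
    by (intro DERIV_sum) auto
  then show "((\<lambda>s. mmul n (A s) (B s) i j) has_real_derivative (mmul n A' (B t) + mmul n (A t) B') i j) (at t)"
    by (simp add: mmul_def sum.distrib)
qed

lemma mat_deriv_mtr: "mat_deriv n A A' t \<Longrightarrow> mat_deriv n (\<lambda>s. mtr (A s)) (mtr A') t"
  unfolding mat_deriv_def mtr_def by auto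

lemma mat_deriv_const: "mat_deriv n (\<lambda>s. C) 0 t"
  unfolding mat_deriv_def by auto

lemma mat_deriv_diff:
  "mat_deriv n A A' t \<Longrightarrow> mat_deriv n B B' t \<Longrightarrow> mat_deriv n (\<lambda>s. A s - B s) (A' - B') t"
  unfolding mat_deriv_def by (auto intro!: derivative_eq_intros)

lemma mat_deriv_unique: "mat_deriv n A D t \<Longrightarrow> mat_deriv n A D' t \<Longrightarrow> mat_eq n D D'"
  unfolding mat_deriv_def mat_eq_def by (metis DERIV_unique)

lemma mat_deriv_cong:
  assumes "mat_deriv n A D t" "\<And>s. mat_eq n (A s) (B s)"
  shows "mat_deriv n B D t"
  unfolding mat_deriv_def
proof (intro allI impI)
  fix i j assume "i < n" "j < n"
  then have "(\<lambda>s. B s i j) = (\<lambda>s. A s i j)"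
    using assms(2) by (simp add: mat_eq_def)
  with assms(1) \<open>i < n\<close> \<open>j < n\<close> show "((\<lambda>s. B s i j) has_real_derivative D i j) (at t)"
    by (simp add: mat_deriv_def)
qed

lemma mat_deriv_conj:
  assumes "mat_deriv n V V' t" "mat_deriv n A A' t"
  shows "mat_deriv n (\<lambda>s. mmul n (mmul n (V s) (A s)) (mtr (V s)))
     (mmul n (mmul n V' (A t) + mmul n (V t) A') (mtr (V t)) + mmul n (mmul n (V t) (A t)) (mtr V')) t"
  by (rule mat_deriv_mmul[OF mat_deriv_mmul[OF assms] mat_deriv_mtr[OF assms(1)]])

lemma tup_deriv_iff: "tup_deriv n d M D t \<longleftrightarrow> (\<forall>k\<in>{1..d}. mat_deriv n (\<lambda>s. M s k) (D k) t)"
  unfolding tup_deriv_def mat_deriv_def by auto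

lemma mat_deriv_skew:
  assumes "\<forall>s. skew_mat n (X s)" "mat_deriv n X X' t"
  shows "skew_mat n X'"
  unfolding skew_mat_def
proof (intro allI impI)
  fix i j assume ij: "i < n" "j < n"
  have skew: "X s i j = - X s j i" for s
    using assms(1) ij unfolding skew_mat_def by blast
  have "((\<lambda>s. - X s j i) has_real_derivative - X' j i) (at t)"
    using assms(2) ij unfolding mat_deriv_def by (auto intro: DERIV_minus)
  then have "((\<lambda>s. X s i j) has_real_derivative - X' j i) (at t)"
    by (simp add: skew)
  moreover have "((\<lambda>s. X s i j) has_real_derivative X' i j) (at t)"
    using assms(2) ij by (simp add: mat_deriv_def)
  ultimately show "X' i j = - X' j i"
    by (metis DERIV_unique)
qed

lemma mat_deriv_zero_entry:
  assumes "mat_deriv n X X' t" "i < n" "j < n" "\<forall>s. X s i j = 0"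
  shows "X' i j = 0"
proof -
  have "((\<lambda>s. X s i j) has_real_derivative X' i j) (at t)"
    using assms(1-3) by (simp add: mat_deriv_def)
  moreover have "((\<lambda>s. X s i j) has_real_derivative 0) (at t)"
    using assms(4) by simp
  ultimately show ?thesis
    by (rule DERIV_unique)
qed

lemma orthogonal_curve_skew:
  assumes "\<forall>s. orthogonal_mat n (V s)" "mat_deriv n V V' t"
  shows "skew_mat n (mmul n (mtr (V t)) V')" (is "skew_mat n ?L")
proof -
  have "mat_deriv n (\<lambda>s. mmul n (mtr (V s)) (V s)) (mmul n (mtr V') (V t) + ?L) t"
    by (rule mat_deriv_mmul[OF mat_deriv_mtr[OF assms(2)] assms(2)])
  moreover have "mat_deriv n (\<lambda>s. mmul n (mtr (V s)) (V s)) 0 t"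
    by (rule mat_deriv_cong[OF mat_deriv_const[of n idm]])
      (use assms(1) orthogonal_mat_left mat_eq_sym in blast)
  ultimately have "mat_eq n (mtr ?L + ?L) 0"
    by (simp add: mat_deriv_unique mtr_mmul)
  then show ?thesis
    unfolding skew_mat_def mat_eq_def mtr_def by (simp add: eq_neg_iff_add_eq_0 add.commute)
qed

lemma in_frame_conj_deriv:
  assumes "orthogonal_mat n U"
  shows "mat_eq n (in_frame n U (mmul n (mmul n V' A + mmul n U A') (mtr U) + mmul n (mmul n U A) (mtr V')))
     (mmul n (mmul n (mtr U) V') A + A' + mmul n A (mtr (mmul n (mtr U) V')))"
proof -
  have "in_frame n U (mmul n (mmul n V' A + mmul n U A') (mtr U) + mmul n (mmul n U A) (mtr V'))
     = mmul n (mmul n (mtr U) V') (mmul n A (mmul n (mtr U) U))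
       + mmul n (mtr U) (mmul n U (mmul n A' (mmul n (mtr U) U)))
       + mmul n (mtr U) (mmul n U (mmul n A (mtr (mmul n (mtr U) V'))))"
    by (simp add: in_frame_def mmul_add_left mmul_add_right mmul_assoc mtr_mmul)
  also have "mat_eq n \<dots> (mmul n (mmul n (mtr U) V') A + mmul n A' (mmul n (mtr U) U) + mmul n A (mtr (mmul n (mtr U) V')))"
    by (intro mat_eq_add mat_eq_mmul mat_eq_refl orthogonal_mat_cancel_right orthogonal_mat_cancel_left assms)
  also have "mat_eq n \<dots> (mmul n (mmul n (mtr U) V') A + A' + mmul n A (mtr (mmul n (mtr U) V')))"
    by (intro mat_eq_add mat_eq_refl orthogonal_mat_cancel_right assms)
  finally show ?thesis .
qed

section \<open>Plane rotations\<close>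

definition elem_skew :: "nat \<Rightarrow> nat \<Rightarrow> mat" where
  "elem_skew a b = (\<lambda>i j. if i = a \<and> j = b then 1 else if i = b \<and> j = a then -1 else 0)"

definition rot :: "nat \<Rightarrow> nat \<Rightarrow> real \<Rightarrow> mat" where
  "rot a b s = (\<lambda>i j. if i = j then (if i = a \<or> i = b then cos s else 1)
     else if i = a \<and> j = b then sin s else if i = b \<and> j = a then - sin s else 0)"

definition rot_deriv :: "nat \<Rightarrow> nat \<Rightarrow> real \<Rightarrow> mat" where
  "rot_deriv a b s = (\<lambda>i j. if i = j then (if i = a \<or> i = b then - sin s else 0)
     else if i = a \<and> j = b then cos s else if i = b \<and> j = a then - cos s else 0)"

lemma mat_deriv_rot: "mat_deriv n (rot a b) (rot_deriv a b s) s"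
  unfolding mat_deriv_def rot_def rot_deriv_def
  by (auto intro!: derivative_eq_intros)

lemma rot_0: "rot a b 0 = idm"
  by (simp add: rot_def idm_def fun_eq_iff)

lemma rot_deriv_0: "a \<noteq> b \<Longrightarrow> rot_deriv a b 0 = elem_skew a b"
  by (simp add: rot_deriv_def elem_skew_def fun_eq_iff)

lemma mtr_elem_skew: "a \<noteq> b \<Longrightarrow> mtr (elem_skew a b) = - elem_skew a b"
  by (auto simp: mtr_def elem_skew_def fun_eq_iff)

lemma orthogonal_rot:
  assumes ab: "a < n" "b < n" "a \<noteq> b"
  shows "orthogonal_mat n (rot a b s)"
  unfolding Defs.orthogonal_mat_def
proof (intro allI impI)
  fix i j assume ij: "i < n" "j < n"
  let ?R = "rot a b s"
  have "mmul n (mtr ?R) ?R i j = (\<Sum>r\<in>{a, b}. ?R r i * ?R r j) + (\<Sum>r\<in>{..<n} - {a, b}. ?R r i * ?R r j)"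
    unfolding mmul_def mtr_def using ab by (subst sum.subset_diff[of "{a, b}"]) auto
  also have "(\<Sum>r\<in>{..<n} - {a, b}. ?R r i * ?R r j) = (\<Sum>r\<in>{..<n} - {a, b}. if r = i then (if i = j then 1 else 0) else 0)"
    by (intro sum.cong refl) (auto simp: rot_def)
  also have "\<dots> = (if i \<noteq> a \<and> i \<noteq> b \<and> i = j then 1 else 0)"
    using ij by (simp add: sum.delta')
  finally have entry: "mmul n (mtr ?R) ?R i j = ?R a i * ?R a j + ?R b i * ?R b j
      + (if i \<noteq> a \<and> i \<noteq> b \<and> i = j then 1 else 0)"
    using ab(3) by simp
  have R: "?R a a = cos s" "?R a b = sin s" "?R b a = - sin s" "?R b b = cos s"
    "\<And>x. x \<noteq> a \<Longrightarrow> x \<noteq> b \<Longrightarrow> ?R a x = 0" "\<And>x. x \<noteq> a \<Longrightarrow> x \<noteq> b \<Longrightarrow> ?R b x = 0"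
    using ab(3) by (auto simp: rot_def)
  have pythagoras: "sin s * sin s + cos s * cos s = 1" "cos s * cos s + sin s * sin s = 1"
    using sin_cos_squared_add[of s] by (simp_all add: power2_eq_square)
  show "mmul n (mtr ?R) ?R i j = (if i = j then 1 else 0)"
    unfolding entry using ab(3)
    by (cases "i = a"; cases "i = b"; cases "j = a"; cases "j = b") (simp_all add: R pythagoras)
qed

lemma sum_elem_skew:
  assumes "a < n" "b < n" "a \<noteq> b"
  shows "(\<Sum>i<n. \<Sum>j<n. elem_skew a b i j * f i j) = f a b - f b a"
proof -
  have "(\<Sum>j<n. elem_skew a b i j * f i j) = (if i = a then f a b else 0) - (if i = b then f b a else 0)" for i
  proof -
    have "(\<Sum>j<n. elem_skew a b i j * f i j)
        = (\<Sum>j<n. (if j = b then (if i = a then f a b else 0) else 0) - (if j = a then (if i = b then f b a else 0) else 0))"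
      by (intro sum.cong refl) (use assms in \<open>auto simp: elem_skew_def\<close>)
    then show ?thesis
      using assms by (simp add: sum_subtractf sum.delta')
  qed
  then show ?thesis
    using assms by (simp add: sum_subtractf sum.delta')
qed

locale flag_blocks =
  fixes n d :: nat and ns :: "nat \<Rightarrow> nat"
  assumes d_pos: "d \<ge> 1"
    and ns_first: "0 < ns 1"
    and ns_mono: "\<forall>k. 1 \<le> k \<and> k < d \<longrightarrow> ns k < ns (Suc k)"
    and ns_last: "ns d < n"
begin

abbreviation "bd \<equiv> bnd ns d n"
abbreviation "B \<equiv> blk ns d n"
abbreviation "J \<equiv> Jmat ns d n"

lemma bnd_Suc_less: "k \<le> d \<Longrightarrow> bd k < bd (Suc k)"
  using d_pos ns_first ns_mono ns_last unfolding bnd_def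
  by (cases "k = 0") (auto, metis Suc_le_eq le_neq_implies_less)

lemma bnd_strict_mono: "k < l \<Longrightarrow> l \<le> d + 1 \<Longrightarrow> bd k < bd l"
proof (induction l)
  case 0
  then show ?case by simp
next
  case (Suc l)
  then show ?case
    using bnd_Suc_less[of l] by (cases "k = l") auto
qed

lemma bnd_mono: "k \<le> l \<Longrightarrow> l \<le> d + 1 \<Longrightarrow> bd k \<le> bd l"
  using bnd_strict_mono[of k l] by (cases "k = l") auto

lemma bnd_0: "bd 0 = 0" and bnd_d: "bd d = ns d" and bnd_top: "bd (d + 1) = n"
  using d_pos by (simp_all add: bnd_def)

definition block_of :: "nat \<Rightarrow> nat" where
  "block_of i = (LEAST p. i < bd p)"

lemma block_of:
  assumes "i < n"
  shows "block_of i \<in> {1..d+1}" and "i \<in> B (block_of i)"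
proof -
  have ex: "i < bd (d + 1)"
    using assms bnd_top by simp
  have less: "i < bd (block_of i)"
    unfolding block_of_def by (rule LeastI[of _ "d + 1"]) (rule ex)
  have le: "block_of i \<le> d + 1"
    unfolding block_of_def by (rule Least_le) (rule ex)
  have pos: "block_of i \<ge> 1"
    using less bnd_0 by (cases "block_of i") auto
  have "\<not> i < bd (block_of i - 1)"
    unfolding block_of_def by (rule not_less_Least) (use pos in \<open>simp add: block_of_def\<close>)
  then show "block_of i \<in> {1..d+1}" "i \<in> B (block_of i)"
    using less le pos by (auto simp: blk_def)
qed

lemma blk_less_n: "p \<in> {1..d+1} \<Longrightarrow> i \<in> B p \<Longrightarrow> i < n"
  using bnd_mono[of p "d + 1"] bnd_top by (auto simp: blk_def)

lemma block_of_eqI: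
  assumes p: "p \<in> {1..d+1}" and i: "i \<in> B p"
  shows "block_of i = p"
proof (rule ccontr)
  have "i < n"
    using blk_less_n p i by blast
  note bi = block_of[OF this]
  assume "block_of i \<noteq> p"
  then consider "block_of i < p" | "p < block_of i"
    by linarith
  then show False
  proof cases
    case 1
    then have "bd (block_of i) \<le> bd (p - 1)"
      using bnd_mono p by auto
    then show False
      using bi i by (auto simp: blk_def)
  next
    case 2
    then have "bd p \<le> bd (block_of i - 1)"
      using bnd_mono bi(1) by auto
    then show False
      using bi i by (auto simp: blk_def)
  qed
qed

lemma in_blk_iff: "i < n \<Longrightarrow> p \<in> {1..d+1} \<Longrightarrow> i \<in> B p \<longleftrightarrow> block_of i = p"
  using block_of_eqI block_of by blast

lemma same_blk_iff:
  "i < n \<Longrightarrow> j < n \<Longrightarrow> (\<exists>p\<in>{1..d+1}. i \<in> B p \<and> j \<in> B p) \<longleftrightarrow> block_of i = block_of j"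
  using in_blk_iff block_of by metis

lemma less_ns_d_iff: "i < n \<Longrightarrow> i < ns d \<longleftrightarrow> block_of i \<le> d"
  using block_of[of i] bnd_mono[of "block_of i" d] bnd_d
  by (cases "block_of i = d + 1") (auto simp: blk_def)

lemma sum_blocks: "m \<le> d + 1 \<Longrightarrow> (\<Sum>s\<in>{1..m}. \<Sum>r\<in>B s. f r) = (\<Sum>r<bd m. f r)"
proof (induction m)
  case 0
  then show ?case by (simp add: bnd_0)
next
  case (Suc m)
  have "(\<Sum>s\<in>{1..Suc m}. \<Sum>r\<in>B s. f r) = (\<Sum>r<bd m. f r) + (\<Sum>r\<in>{bd m..<bd (Suc m)}. f r)"
    using Suc by (simp add: blk_def)
  also have "\<dots> = (\<Sum>r<bd (Suc m). f r)"
    using bnd_mono[of m "Suc m"] Suc.prems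
    by (simp add: lessThan_atLeast0 sum.atLeastLessThan_concat)
  finally show ?case .
qed

lemma sum_all_blocks: "(\<Sum>s\<in>{1..d+1}. \<Sum>r\<in>B s. f r) = (\<Sum>r<n. f r)"
  using sum_blocks[of "d + 1"] bnd_top by simp

lemma sum_first_blocks: "(\<Sum>s\<in>{1..d}. \<Sum>r\<in>B s. f r) = (\<Sum>r<ns d. f r)"
  using sum_blocks[of d] bnd_d by simp

lemma sum_blocks_diff:
  assumes "S \<subseteq> {1..d+1}" "\<And>k r. k \<in> K \<Longrightarrow> r \<in> B k \<Longrightarrow> f r = 0"
  shows "(\<Sum>s\<in>S - K. \<Sum>r\<in>B s. f r) = (\<Sum>s\<in>S. \<Sum>r\<in>B s. f r)"
proof (rule sum.mono_neutral_left)
  show "finite S"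
    by (rule finite_subset[OF assms(1)]) simp
qed (use assms(2) in auto)

definition diag_blocks_zero :: "mat \<Rightarrow> bool" where
  "diag_blocks_zero M \<longleftrightarrow> (\<forall>i<n. \<forall>j<n. block_of i = block_of j \<longrightarrow> M i j = 0)"

lemma diag_blocks_zero_iff:
  "diag_blocks_zero M \<longleftrightarrow> (\<forall>k\<in>{1..d+1}. \<forall>i\<in>B k. \<forall>j\<in>B k. M i j = 0)"
  unfolding diag_blocks_zero_def using block_of block_of_eqI blk_less_n by metis

definition jdiag :: "nat \<Rightarrow> nat \<Rightarrow> real" where
  "jdiag k i = (if i \<in> B k then 1 else -1)"

definition jgap :: "nat \<Rightarrow> nat \<Rightarrow> nat \<Rightarrow> real" where
  "jgap k i j = jdiag k j - jdiag k i"

definition jcomm :: "mat \<Rightarrow> nat \<Rightarrow> mat" where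
  "jcomm X k = mmul n X (J k) - mmul n (J k) X"

lemma mmul_J_right: "j < n \<Longrightarrow> mmul n A (J k) i j = A i j * jdiag k j"
  unfolding mmul_def Jmat_def jdiag_def
  by (simp add: if_distrib[where f = "\<lambda>x. _ * x"] sum.delta' cong: if_cong)

lemma mmul_J_left: "i < n \<Longrightarrow> mmul n (J k) A i j = jdiag k i * A i j"
  unfolding mmul_def Jmat_def jdiag_def
  by (simp add: if_distrib[where f = "\<lambda>x. x * _"] sum.delta cong: if_cong)

lemma jcomm_entry: "i < n \<Longrightarrow> j < n \<Longrightarrow> jcomm X k i j = X i j * jgap k i j"
  by (simp add: jcomm_def mmul_J_left mmul_J_right jgap_def algebra_simps)

lemma mat_deriv_jcomm: "mat_deriv n X X' t \<Longrightarrow> mat_deriv n (\<lambda>s. jcomm (X s) k) (jcomm X' k) t"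
  using mat_deriv_diff[OF mat_deriv_mmul[OF _ mat_deriv_const] mat_deriv_mmul[OF mat_deriv_const]]
  by (simp add: jcomm_def)

lemma jdiag_block_of: "i < n \<Longrightarrow> k \<in> {1..d+1} \<Longrightarrow> jdiag k i = (if block_of i = k then 1 else -1)"
  using in_blk_iff[of i k] by (simp add: jdiag_def)

lemma jgap_block_of:
  "i < n \<Longrightarrow> j < n \<Longrightarrow> k \<in> {1..d} \<Longrightarrow>
    jgap k i j = 2 * (of_bool (k = block_of j) - of_bool (k = block_of i))"
  by (simp add: jgap_def jdiag_block_of)

lemma mtr_J: "mtr (J k) = J k"
  by (simp add: mtr_def Jmat_def fun_eq_iff)

lemma J_commute: "mat_eq n (mmul n (J k) (J l)) (mmul n (J l) (J k))"
  by (simp add: mat_eq_def mmul_J_left) (simp add: Jmat_def jdiag_def)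

lemma J_square: "mat_eq n (mmul n (J k) (J k)) idm"
  by (simp add: mat_eq_def mmul_J_left) (simp add: Jmat_def jdiag_def idm_def)

definition kdelta :: "nat \<Rightarrow> nat \<Rightarrow> real" where
  "kdelta p q = of_bool (p = q \<and> p \<in> {1..d})"

lemma sum_indicator_diff_mult:
  "(\<Sum>k\<in>{1..d}. (of_bool (k = a) - of_bool (k = b)) * (of_bool (k = c) - of_bool (k = e)))
    = kdelta a c - kdelta a e - kdelta b c + kdelta b e"
proof -
  have prod: "(\<Sum>k\<in>{1..d}. of_bool (k = x) * of_bool (k = y) :: real) = kdelta x y" for x y
    by (simp add: kdelta_def of_bool_def if_distrib[where f = "\<lambda>x. x * _"] sum.delta' cong: if_cong)
  show ?thesis
    unfolding left_diff_distrib right_diff_distrib sum_subtractf prod by simp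
qed

lemma sum_jgap_mult:
  assumes "i < n" "j < n" "a < n" "b < n"
  shows "(\<Sum>k\<in>{1..d}. jgap k i j * jgap k a b) = 4 * (kdelta (block_of j) (block_of b)
      - kdelta (block_of j) (block_of a) - kdelta (block_of i) (block_of b) + kdelta (block_of i) (block_of a))"
proof -
  have "(\<Sum>k\<in>{1..d}. jgap k i j * jgap k a b) = 4 * (\<Sum>k\<in>{1..d}.
      (of_bool (k = block_of j) - of_bool (k = block_of i)) * (of_bool (k = block_of b) - of_bool (k = block_of a)))"
    unfolding sum_distrib_left by (intro sum.cong refl) (simp add: jgap_block_of assms algebra_simps)
  then show ?thesis
    by (simp only: sum_indicator_diff_mult)
qed

section \<open>Tangent vectors of the flag manifold\<close>

lemma Flag_relations:
  assumes "P \<in> Flag ns d n" "k \<in> {1..d}" "l \<in> {1..d}"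
  shows "mat_eq n (P k) (mtr (P k))"
    and "mat_eq n (mmul n (P k) (P l)) (mmul n (P l) (P k))"
    and "mat_eq n (mmul n (P k) (P k)) idm"
proof -
  obtain V where V: "orthogonal_mat n V" and P: "tup_eq n d P (\<lambda>k. mmul n (mmul n V (J k)) (mtr V))"
    using assms(1) unfolding Flag_def by blast
  define Q where "Q k = mmul n (mmul n V (J k)) (mtr V)" for k
  have PQ: "mat_eq n (P k) (Q k)" if "k \<in> {1..d}" for k
    using P that unfolding tup_eq_def mat_eq_def Q_def by blast
  have "mtr (Q k) = Q k"
    by (simp add: Q_def mtr_mmul mtr_J mmul_assoc)
  then show "mat_eq n (P k) (mtr (P k))"
    using PQ[OF assms(2)] mat_eq_mtr[OF PQ[OF assms(2)]] unfolding mat_eq_def by metis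
  have "mat_eq n (mmul n (P k) (P l)) (mmul n (Q k) (Q l))"
    by (intro mat_eq_mmul PQ assms)
  also have "mat_eq n \<dots> (mmul n (mmul n V (mmul n (J k) (J l))) (mtr V))"
    unfolding Q_def by (rule orthogonal_mat_conj_mmul[OF V])
  also have "mat_eq n \<dots> (mmul n (mmul n V (mmul n (J l) (J k))) (mtr V))"
    by (intro mat_eq_mmul mat_eq_refl J_commute)
  also have "mat_eq n \<dots> (mmul n (Q l) (Q k))"
    unfolding Q_def by (rule mat_eq_sym[OF orthogonal_mat_conj_mmul[OF V]])
  also have "mat_eq n \<dots> (mmul n (P l) (P k))"
    by (intro mat_eq_mmul mat_eq_sym[OF PQ] assms)
  finally show "mat_eq n (mmul n (P k) (P l)) (mmul n (P l) (P k))" .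
  have "mat_eq n (mmul n (P k) (P k)) (mmul n (Q k) (Q k))"
    by (intro mat_eq_mmul PQ assms)
  also have "mat_eq n \<dots> (mmul n (mmul n V (mmul n (J k) (J k))) (mtr V))"
    unfolding Q_def by (rule orthogonal_mat_conj_mmul[OF V])
  also have "mat_eq n \<dots> (mmul n (mmul n V idm) (mtr V))"
    by (intro mat_eq_mmul mat_eq_refl J_square)
  also have "mat_eq n \<dots> (mmul n V (mtr V))"
    by (intro mat_eq_mmul mat_eq_refl mat_eq_mmul_idm_right)
  also have "mat_eq n \<dots> idm"
    by (rule orthogonal_mat_right[OF V])
  finally show "mat_eq n (mmul n (P k) (P k)) idm" .
qed

lemma flag_tangent_relations:
  assumes W: "W \<in> flag_tangent ns d n P" and k: "k \<in> {1..d}" and l: "l \<in> {1..d}"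
  shows "mat_eq n (W k) (mtr (W k))"
    and "mat_eq n (mmul n (W k) (P l) + mmul n (P k) (W l)) (mmul n (W l) (P k) + mmul n (P l) (W k))"
    and "mat_eq n (mmul n (W k) (P k) + mmul n (P k) (W k)) 0"
proof -
  obtain \<gamma> \<Gamma> where flag: "\<forall>s. \<gamma> s \<in> Flag ns d n" and start: "tup_eq n d (\<gamma> 0) P"
    and deriv: "\<forall>s. tup_deriv n d \<gamma> (\<Gamma> s) s" and vel: "tup_eq n d W (\<Gamma> 0)"
    using W unfolding flag_tangent_def by blast
  have P: "mat_eq n (\<gamma> 0 m) (P m)" and WG: "mat_eq n (W m) (\<Gamma> 0 m)"
    and D: "mat_deriv n (\<lambda>s. \<gamma> s m) (\<Gamma> 0 m) 0" if "m \<in> {1..d}" for m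
    using start vel deriv that unfolding tup_eq_def mat_eq_def tup_deriv_iff by blast+
  have "mat_deriv n (\<lambda>s. \<gamma> s k) (mtr (\<Gamma> 0 k)) 0"
    by (rule mat_deriv_cong[OF mat_deriv_mtr[OF D[OF k]]])
      (use Flag_relations(1)[OF flag[rule_format] k k] mat_eq_sym in blast)
  from mat_deriv_unique[OF D[OF k] this] WG[OF k] mat_eq_mtr[OF WG[OF k]]
  show "mat_eq n (W k) (mtr (W k))"
    unfolding mat_eq_def by metis
  have "mat_deriv n (\<lambda>s. mmul n (\<gamma> s l) (\<gamma> s k)) (mmul n (\<Gamma> 0 l) (\<gamma> 0 k) + mmul n (\<gamma> 0 l) (\<Gamma> 0 k)) 0"
    by (rule mat_deriv_mmul[OF D[OF l] D[OF k]])
  then have "mat_deriv n (\<lambda>s. mmul n (\<gamma> s k) (\<gamma> s l)) (mmul n (\<Gamma> 0 l) (\<gamma> 0 k) + mmul n (\<gamma> 0 l) (\<Gamma> 0 k)) 0"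
    by (rule mat_deriv_cong) (use Flag_relations(2)[OF flag[rule_format] l k] in blast)
  note commute = mat_deriv_unique[OF mat_deriv_mmul[OF D[OF k] D[OF l]] this]
  have "mat_eq n (mmul n (W k) (P l) + mmul n (P k) (W l))
      (mmul n (\<Gamma> 0 k) (\<gamma> 0 l) + mmul n (\<gamma> 0 k) (\<Gamma> 0 l))"
    by (intro mat_eq_add mat_eq_mmul WG mat_eq_sym[OF P] k l)
  also note commute
  also have "mat_eq n (mmul n (\<Gamma> 0 l) (\<gamma> 0 k) + mmul n (\<gamma> 0 l) (\<Gamma> 0 k))
      (mmul n (W l) (P k) + mmul n (P l) (W k))"
    by (intro mat_eq_add mat_eq_mmul mat_eq_sym[OF WG] P k l)
  finally show "mat_eq n (mmul n (W k) (P l) + mmul n (P k) (W l)) (mmul n (W l) (P k) + mmul n (P l) (W k))" .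
  have "mat_deriv n (\<lambda>s. mmul n (\<gamma> s k) (\<gamma> s k)) 0 0"
    by (rule mat_deriv_cong[OF mat_deriv_const[of n idm]])
      (use Flag_relations(3)[OF flag[rule_format] k k] mat_eq_sym in blast)
  note square = mat_deriv_unique[OF mat_deriv_mmul[OF D[OF k] D[OF k]] this]
  have "mat_eq n (mmul n (W k) (P k) + mmul n (P k) (W k))
      (mmul n (\<Gamma> 0 k) (\<gamma> 0 k) + mmul n (\<gamma> 0 k) (\<Gamma> 0 k))"
    by (intro mat_eq_add mat_eq_mmul WG mat_eq_sym[OF P] k)
  also note square
  finally show "mat_eq n (mmul n (W k) (P k) + mmul n (P k) (W k)) 0" .
qed

lemma in_frame_flag_tangent_relations:
  assumes U: "orthogonal_mat n U"
    and W: "W \<in> flag_tangent ns d n (\<lambda>k. mmul n (mmul n U (J k)) (mtr U))"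
    and k: "k \<in> {1..d}" and l: "l \<in> {1..d}"
  shows "mat_eq n (in_frame n U (W k)) (mtr (in_frame n U (W k)))"
    and "mat_eq n (mmul n (in_frame n U (W k)) (J l) + mmul n (J k) (in_frame n U (W l)))
      (mmul n (in_frame n U (W l)) (J k) + mmul n (J l) (in_frame n U (W k)))"
    and "mat_eq n (mmul n (in_frame n U (W k)) (J k) + mmul n (J k) (in_frame n U (W k))) 0"
proof -
  let ?P = "\<lambda>k. mmul n (mmul n U (J k)) (mtr U)"
  have frame: "mat_eq n (in_frame n U (mmul n (W k') (?P l') + mmul n (?P k') (W l')))
      (mmul n (in_frame n U (W k')) (J l') + mmul n (J k') (in_frame n U (W l')))" for k' l'
    unfolding in_frame_add
    by (intro mat_eq_add in_frame_mmul_conj_right in_frame_mmul_conj_left U)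
  show "mat_eq n (in_frame n U (W k)) (mtr (in_frame n U (W k)))"
    unfolding mtr_in_frame by (intro in_frame_cong flag_tangent_relations(1)[OF W k k])
  have "mat_eq n (mmul n (in_frame n U (W k)) (J l) + mmul n (J k) (in_frame n U (W l)))
      (in_frame n U (mmul n (W k) (?P l) + mmul n (?P k) (W l)))"
    by (rule mat_eq_sym[OF frame])
  also have "mat_eq n \<dots> (in_frame n U (mmul n (W l) (?P k) + mmul n (?P l) (W k)))"
    by (intro in_frame_cong flag_tangent_relations(2)[OF W k l])
  also have "mat_eq n \<dots> (mmul n (in_frame n U (W l)) (J k) + mmul n (J l) (in_frame n U (W k)))"
    by (rule frame)
  finally show "mat_eq n (mmul n (in_frame n U (W k)) (J l) + mmul n (J k) (in_frame n U (W l)))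
      (mmul n (in_frame n U (W l)) (J k) + mmul n (J l) (in_frame n U (W k)))" .
  have "mat_eq n (mmul n (in_frame n U (W k)) (J k) + mmul n (J k) (in_frame n U (W k)))
      (in_frame n U (mmul n (W k) (?P k) + mmul n (?P k) (W k)))"
    by (rule mat_eq_sym[OF frame])
  also have "mat_eq n \<dots> (in_frame n U 0)"
    by (intro in_frame_cong flag_tangent_relations(3)[OF W k k])
  finally show "mat_eq n (mmul n (in_frame n U (W k)) (J k) + mmul n (J k) (in_frame n U (W k))) 0"
    by simp
qed

lemma anticommutator_J_entry_zero:
  assumes "mat_eq n (mmul n M (J k) + mmul n (J k) M) 0" "k \<in> {1..d}" "i < n" "j < n"
    "block_of i = k \<longleftrightarrow> block_of j = k"
  shows "M i j = 0"
  using mat_eqD[OF assms(1) assms(3,4)] assms(2-5) by (auto simp: mmul_J_left mmul_J_right jdiag_block_of)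

lemma commutation_J_entry:
  assumes "mat_eq n (mmul n (W k) (J l) + mmul n (J k) (W l)) (mmul n (W l) (J k) + mmul n (J l) (W k))"
    "k \<in> {1..d}" "l \<in> {1..d}" "i < n" "j < n" "block_of i = k" "block_of j = l" "k \<noteq> l"
  shows "W l i j = - W k i j"
  using mat_eqD[OF assms(1) assms(4,5)] assms(2-8) by (simp add: mmul_J_left mmul_J_right jdiag_block_of)

text \<open>The witness: \<open>\<Omega>\<^sub>i\<^sub>j\<close> is read off from \<open>W\<close> at the block of \<open>i\<close> when that block is not
  the last one, and at the block of \<open>j\<close> otherwise.\<close>

lemma commutator_form_of_relations:
  assumes sym: "\<And>k. k \<in> {1..d} \<Longrightarrow> mat_eq n (W k) (mtr (W k))"
    and comm: "\<And>k l. k \<in> {1..d} \<Longrightarrow> l \<in> {1..d} \<Longrightarrow>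
      mat_eq n (mmul n (W k) (J l) + mmul n (J k) (W l)) (mmul n (W l) (J k) + mmul n (J l) (W k))"
    and anti: "\<And>k. k \<in> {1..d} \<Longrightarrow> mat_eq n (mmul n (W k) (J k) + mmul n (J k) (W k)) 0"
  shows "\<exists>\<Omega>. skew_mat n \<Omega> \<and> (\<forall>k\<in>{1..d}. mat_eq n (W k) (jcomm \<Omega> k))"
proof -
  have zero: "W k i j = 0"
    if "k \<in> {1..d}" "i < n" "j < n" "block_of i = k \<longleftrightarrow> block_of j = k" for k i j
    by (rule anticommutator_J_entry_zero[OF anti[OF that(1)] that])
  have swap: "W (block_of j) i j = - W (block_of i) i j"
    if "i < n" "j < n" "block_of i \<noteq> block_of j" "block_of i \<in> {1..d}" "block_of j \<in> {1..d}" for i j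
    by (rule commutation_J_entry[OF comm[OF that(4,5)] that(4,5,1,2) refl refl that(3)])
  have W_sym: "W k j i = W k i j" if "k \<in> {1..d}" "i < n" "j < n" for k i j
    using mat_eqD[OF sym[OF that(1)] that(2,3)] by (simp add: mtr_def)
  define \<Omega> where "\<Omega> i j = (if block_of i = block_of j then 0
    else if block_of i \<le> d then - W (block_of i) i j / 2 else W (block_of j) i j / 2)" for i j
  have "W k i j = \<Omega> i j * jgap k i j" if k: "k \<in> {1..d}" and ij: "i < n" "j < n" for k i j
  proof -
    consider "block_of i = k \<longleftrightarrow> block_of j = k" | "block_of i = k" "block_of j \<noteq> k"
      | "block_of j = k" "block_of i \<noteq> k"
      by blast
    then show ?thesis
    proof cases
      case 1
      then show ?thesis
        using zero[OF k ij] k ij by (auto simp: jgap_def jdiag_block_of)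
    next
      case 2
      then show ?thesis
        using k ij by (auto simp: jgap_def jdiag_block_of \<Omega>_def)
    next
      case 3
      then show ?thesis
        using k ij swap[OF ij] block_of[OF ij(1)] by (auto simp: jgap_def jdiag_block_of \<Omega>_def)
    qed
  qed
  then have "\<forall>k\<in>{1..d}. mat_eq n (W k) (jcomm \<Omega> k)"
    by (simp add: mat_eq_def jcomm_entry)
  moreover have "skew_mat n \<Omega>"
    unfolding skew_mat_def
  proof (intro allI impI)
    fix i j assume ij: "i < n" "j < n"
    have "W p j i = W p i j" if "p \<in> {1..d}" for p
      using W_sym that ij by blast
    then show "\<Omega> i j = - \<Omega> j i"
      using block_of[OF ij(1)] block_of[OF ij(2)] swap[OF ij] by (auto simp: \<Omega>_def)
  qed
  ultimately show ?thesis
    by blast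
qed

lemma flag_tangent_in_frame:
  assumes "orthogonal_mat n U" "W \<in> flag_tangent ns d n (\<lambda>k. mmul n (mmul n U (J k)) (mtr U))"
  shows "\<exists>\<Omega>. skew_mat n \<Omega> \<and> (\<forall>k\<in>{1..d}. mat_eq n (in_frame n U (W k)) (jcomm \<Omega> k))"
  by (rule commutator_form_of_relations) (use in_frame_flag_tangent_relations[OF assms] in auto)

lemma givens_flag_tangent:
  assumes U: "orthogonal_mat n U" and ab: "a < n" "b < n" "a \<noteq> b"
  shows "\<exists>W\<in>flag_tangent ns d n (\<lambda>k. mmul n (mmul n U (J k)) (mtr U)).
           \<forall>k\<in>{1..d}. mat_eq n (in_frame n U (W k)) (jcomm (elem_skew a b) k)"
proof -
  define M where "M s = mmul n U (rot a b s)" for s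
  define M' where "M' s = mmul n U (rot_deriv a b s)" for s
  define \<gamma> where "\<gamma> s k = mmul n (mmul n (M s) (J k)) (mtr (M s))" for s k
  define \<Gamma> where "\<Gamma> s k = mmul n (mmul n (M' s) (J k) + mmul n (M s) 0) (mtr (M s))
      + mmul n (mmul n (M s) (J k)) (mtr (M' s))" for s k
  have "mat_deriv n M (mmul n 0 (rot a b s) + M' s) s" for s
    unfolding M_def M'_def by (rule mat_deriv_mmul[OF mat_deriv_const mat_deriv_rot])
  then have "tup_deriv n d \<gamma> (\<Gamma> s) s" for s
    unfolding tup_deriv_iff \<gamma>_def \<Gamma>_def using mat_deriv_conj[OF _ mat_deriv_const] by simp
  moreover have "\<gamma> s \<in> Flag ns d n" for s
    unfolding Flag_def \<gamma>_def tup_eq_def M_def using orthogonal_mat_mmul[OF U orthogonal_rot[OF ab]] by blast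
  moreover have M0: "mat_eq n (M 0) U"
    unfolding M_def rot_0 by (rule mat_eq_mmul_idm_right)
  then have "tup_eq n d (\<gamma> 0) (\<lambda>k. mmul n (mmul n U (J k)) (mtr U))"
    unfolding tup_eq_def \<gamma>_def using mat_eq_mmul[OF mat_eq_mmul[OF _ mat_eq_refl] mat_eq_mtr]
    unfolding mat_eq_def by blast
  ultimately have "\<Gamma> 0 \<in> flag_tangent ns d n (\<lambda>k. mmul n (mmul n U (J k)) (mtr U))"
    unfolding flag_tangent_def by (blast intro: tup_eq_def[THEN iffD2])
  moreover have "mat_eq n (in_frame n U (\<Gamma> 0 k)) (jcomm (elem_skew a b) k)" for k
  proof -
    have M'0: "M' 0 = mmul n U (elem_skew a b)"
      unfolding M'_def rot_deriv_0[OF ab(3)] ..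
    have "mat_eq n (in_frame n U (\<Gamma> 0 k)) (in_frame n U (mmul n (mmul n (mmul n U (elem_skew a b)) (J k)
        + mmul n U 0) (mtr U) + mmul n (mmul n U (J k)) (mtr (mmul n U (elem_skew a b)))))"
      unfolding \<Gamma>_def M'0 by (intro in_frame_cong mat_eq_add mat_eq_mmul mat_eq_refl M0 mat_eq_mtr)
    also have "mat_eq n \<dots> (mmul n (mmul n (mtr U) (mmul n U (elem_skew a b))) (J k) + 0
        + mmul n (J k) (mtr (mmul n (mtr U) (mmul n U (elem_skew a b)))))"
      by (rule in_frame_conj_deriv[OF U])
    also have "mat_eq n \<dots> (mmul n (elem_skew a b) (J k) + 0 + mmul n (J k) (mtr (elem_skew a b)))"
      by (intro mat_eq_add mat_eq_mmul mat_eq_refl mat_eq_mtr orthogonal_mat_cancel_left U)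
    also have "mmul n (elem_skew a b) (J k) + 0 + mmul n (J k) (mtr (elem_skew a b)) = jcomm (elem_skew a b) k"
      by (simp add: mtr_elem_skew[OF ab(3)] jcomm_def mmul_def sum_negf fun_eq_iff)
    finally show ?thesis .
  qed
  ultimately show ?thesis
    by blast
qed

section \<open>Pairing the derivative of \<open>Y\<close> with tangent vectors\<close>

text \<open>With \<open>L = U\<^sup>T U'\<close>, \<open>frame_deriv L X X' k\<close> is \<open>U\<^sup>T Y\<^sub>k' U\<close> for
  \<open>Y\<^sub>k = U [X, J\<^sub>k] U\<^sup>T\<close>, and \<open>pairing\<close> is chosen so that the Frobenius pairing of
  \<open>Y'\<close> with the tangent vector \<open>U [\<Omega>, J\<^sub>k] U\<^sup>T\<close> is \<open>\<Sum>\<^sub>i\<^sub>j \<Omega>\<^sub>i\<^sub>j pairing\<^sub>i\<^sub>j\<close>.\<close>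

definition frame_deriv :: "mat \<Rightarrow> mat \<Rightarrow> mat \<Rightarrow> nat \<Rightarrow> mat" where
  "frame_deriv L X X' k = mmul n L (jcomm X k) + jcomm X' k + mmul n (jcomm X k) (mtr L)"

definition pairing :: "mat \<Rightarrow> mat \<Rightarrow> mat \<Rightarrow> mat" where
  "pairing L X X' i j = (\<Sum>k\<in>{1..d}. frame_deriv L X X' k i j * jgap k i j)"

lemma pairing_same_block:
  assumes "i < n" "j < n" "block_of i = block_of j"
  shows "pairing L X X' i j = 0"
  using assms by (simp add: pairing_def jgap_block_of)

lemma frobenius_pairing:
  assumes U: "orthogonal_mat n U"
    and D: "\<forall>k\<in>{1..d}. mat_eq n (in_frame n U (D k)) (frame_deriv L X X' k)"
    and W: "\<forall>k\<in>{1..d}. mat_eq n (in_frame n U (W k)) (jcomm \<Omega> k)"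
  shows "frob n d D W = (\<Sum>i<n. \<Sum>j<n. \<Omega> i j * pairing L X X' i j)"
proof -
  have "frob n d D W = (\<Sum>k\<in>{1..d}. \<Sum>i<n. \<Sum>j<n. frame_deriv L X X' k i j * (\<Omega> i j * jgap k i j))"
    unfolding frob_def
  proof (rule sum.cong[OF refl])
    fix k assume k: "k \<in> {1..d}"
    show "(\<Sum>i<n. \<Sum>j<n. D k i j * W k i j) = (\<Sum>i<n. \<Sum>j<n. frame_deriv L X X' k i j * (\<Omega> i j * jgap k i j))"
      unfolding frobenius_in_frame[OF U, of "D k" "W k", symmetric]
      by (intro sum.cong refl) (simp add: mat_eqD[OF D[rule_format, OF k]] mat_eqD[OF W[rule_format, OF k]] jcomm_entry)
  qed
  also have "\<dots> = (\<Sum>i<n. \<Sum>j<n. \<Sum>k\<in>{1..d}. frame_deriv L X X' k i j * (\<Omega> i j * jgap k i j))"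
    by (simp only: sum.swap[of _ "{1..d}"])
  also have "\<dots> = (\<Sum>i<n. \<Sum>j<n. \<Omega> i j * pairing L X X' i j)"
    unfolding pairing_def by (simp add: sum_distrib_left mult_ac)
  finally show ?thesis .
qed

lemma orthogonal_to_flag_tangent_iff:
  assumes U: "orthogonal_mat n U"
    and D: "\<forall>k\<in>{1..d}. mat_eq n (in_frame n U (D k)) (frame_deriv L X X' k)"
  shows "(\<forall>W\<in>flag_tangent ns d n (\<lambda>k. mmul n (mmul n U (J k)) (mtr U)). frob n d D W = 0)
    \<longleftrightarrow> (\<forall>i<n. \<forall>j<n. block_of i \<noteq> block_of j \<longrightarrow> pairing L X X' i j = pairing L X X' j i)"
proof
  assume orth: "\<forall>W\<in>flag_tangent ns d n (\<lambda>k. mmul n (mmul n U (J k)) (mtr U)). frob n d D W = 0"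
  show "\<forall>i<n. \<forall>j<n. block_of i \<noteq> block_of j \<longrightarrow> pairing L X X' i j = pairing L X X' j i"
  proof (intro allI impI)
    fix i j assume ij: "i < n" "j < n" "block_of i \<noteq> block_of j"
    then have "i \<noteq> j"
      by auto
    obtain W where "W \<in> flag_tangent ns d n (\<lambda>k. mmul n (mmul n U (J k)) (mtr U))"
      and W: "\<forall>k\<in>{1..d}. mat_eq n (in_frame n U (W k)) (jcomm (elem_skew i j) k)"
      using givens_flag_tangent[OF U ij(1,2) \<open>i \<noteq> j\<close>] by blast
    with orth have "0 = frob n d D W"
      by simp
    also have "\<dots> = pairing L X X' i j - pairing L X X' j i"
      unfolding frobenius_pairing[OF U D W] by (rule sum_elem_skew[OF ij(1,2) \<open>i \<noteq> j\<close>])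
    finally show "pairing L X X' i j = pairing L X X' j i"
      by simp
  qed
next
  assume sym_off: "\<forall>i<n. \<forall>j<n. block_of i \<noteq> block_of j \<longrightarrow> pairing L X X' i j = pairing L X X' j i"
  then have sym: "pairing L X X' i j = pairing L X X' j i" if "i < n" "j < n" for i j
    using pairing_same_block that by (cases "block_of i = block_of j") auto
  show "\<forall>W\<in>flag_tangent ns d n (\<lambda>k. mmul n (mmul n U (J k)) (mtr U)). frob n d D W = 0"
  proof
    fix W assume "W \<in> flag_tangent ns d n (\<lambda>k. mmul n (mmul n U (J k)) (mtr U))"
    then obtain \<Omega> where "skew_mat n \<Omega>" and W: "\<forall>k\<in>{1..d}. mat_eq n (in_frame n U (W k)) (jcomm \<Omega> k)"
      using flag_tangent_in_frame[OF U] by blast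
    then show "frob n d D W = 0"
      unfolding frobenius_pairing[OF U D W] using sum_skew_mult_sym sym by blast
  qed
qed

lemma pairing_expand:
  assumes "i < n" "j < n"
  shows "pairing L X X' i j = (\<Sum>r<n. L i r * X r j * (\<Sum>k\<in>{1..d}. jgap k r j * jgap k i j))
      + X' i j * (\<Sum>k\<in>{1..d}. jgap k i j * jgap k i j)
      + (\<Sum>r<n. X i r * L j r * (\<Sum>k\<in>{1..d}. jgap k i r * jgap k i j))"
proof -
  have "frame_deriv L X X' k i j = (\<Sum>r<n. L i r * X r j * jgap k r j) + X' i j * jgap k i j
      + (\<Sum>r<n. X i r * L j r * jgap k i r)" for k
    using assms by (simp add: frame_deriv_def mmul_def mtr_def jcomm_entry mult_ac)
  then have "pairing L X X' i j = (\<Sum>k\<in>{1..d}. (\<Sum>r<n. L i r * X r j * jgap k r j * jgap k i j)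
      + X' i j * (jgap k i j * jgap k i j) + (\<Sum>r<n. X i r * L j r * jgap k i r * jgap k i j))"
    unfolding pairing_def
    by (simp add: sum_distrib_left sum_distrib_right mult_ac distrib_left distrib_right)
  also have "\<dots> = (\<Sum>k\<in>{1..d}. \<Sum>r<n. L i r * X r j * jgap k r j * jgap k i j)
      + X' i j * (\<Sum>k\<in>{1..d}. jgap k i j * jgap k i j)
      + (\<Sum>k\<in>{1..d}. \<Sum>r<n. X i r * L j r * jgap k i r * jgap k i j)"
    by (simp add: sum.distrib sum_distrib_left)
  also have "\<dots> = (\<Sum>r<n. \<Sum>k\<in>{1..d}. L i r * X r j * jgap k r j * jgap k i j)
      + X' i j * (\<Sum>k\<in>{1..d}. jgap k i j * jgap k i j)
      + (\<Sum>r<n. \<Sum>k\<in>{1..d}. X i r * L j r * jgap k i r * jgap k i j)"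
    by (simp only: sum.swap[of _ "{1..d}"])
  finally show ?thesis
    by (simp add: sum_distrib_left mult.assoc)
qed

lemma pairing_offblock:
  assumes ij: "i < n" "j < n" "block_of i \<noteq> block_of j"
    and X: "diag_blocks_zero X" and L: "diag_blocks_zero L"
  shows "pairing L X X' i j = 4 * kdelta (block_of j) (block_of j) * (\<Sum>r<n. L i r * X r j)
      + 4 * (kdelta (block_of i) (block_of i) + kdelta (block_of j) (block_of j)) * X' i j
      + 4 * kdelta (block_of i) (block_of i) * (\<Sum>r<n. X i r * L j r)"
proof -
  have left_term: "L i r * X r j * (\<Sum>k\<in>{1..d}. jgap k r j * jgap k i j)
      = 4 * kdelta (block_of j) (block_of j) * (L i r * X r j)" if r: "r < n" for r
  proof (cases "block_of r = block_of i \<or> block_of r = block_of j")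
    case True
    then have "L i r * X r j = 0"
      using X L r ij unfolding diag_blocks_zero_def by auto
    then show ?thesis by (simp only: mult_zero_left mult_zero_right)
  next
    case False
    then show ?thesis
      unfolding sum_jgap_mult[OF r ij(2) ij(1,2)] using ij by (simp add: kdelta_def)
  qed
  have right_term: "X i r * L j r * (\<Sum>k\<in>{1..d}. jgap k i r * jgap k i j)
      = 4 * kdelta (block_of i) (block_of i) * (X i r * L j r)" if r: "r < n" for r
  proof (cases "block_of r = block_of i \<or> block_of r = block_of j")
    case True
    then have "X i r * L j r = 0"
      using X L r ij unfolding diag_blocks_zero_def by auto
    then show ?thesis by (simp only: mult_zero_left mult_zero_right)
  next
    case False
    then show ?thesis
      unfolding sum_jgap_mult[OF ij(1) r ij(1,2)] using ij by (simp add: kdelta_def)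
  qed
  have middle: "(\<Sum>k\<in>{1..d}. jgap k i j * jgap k i j)
      = 4 * (kdelta (block_of i) (block_of i) + kdelta (block_of j) (block_of j))"
    unfolding sum_jgap_mult[OF ij(1,2) ij(1,2)] using ij by (simp add: kdelta_def)
  have left: "(\<Sum>r<n. L i r * X r j * (\<Sum>k\<in>{1..d}. jgap k r j * jgap k i j))
      = 4 * kdelta (block_of j) (block_of j) * (\<Sum>r<n. L i r * X r j)"
    unfolding sum_distrib_left[of "4 * kdelta (block_of j) (block_of j)"]
    by (intro sum.cong refl left_term) simp
  have right: "(\<Sum>r<n. X i r * L j r * (\<Sum>k\<in>{1..d}. jgap k i r * jgap k i j))
      = 4 * kdelta (block_of i) (block_of i) * (\<Sum>r<n. X i r * L j r)"
    unfolding sum_distrib_left[of "4 * kdelta (block_of i) (block_of i)"]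
    by (intro sum.cong refl right_term) simp
  show ?thesis
    unfolding pairing_expand[OF ij(1,2)] left middle right by (simp add: algebra_simps)
qed

lemma pairing_antisym:
  assumes ij: "i < n" "j < n" "block_of i \<noteq> block_of j"
    and X: "diag_blocks_zero X" "skew_mat n X" and L: "diag_blocks_zero L" "skew_mat n L"
    and X': "skew_mat n X'"
  shows "pairing L X X' i j - pairing L X X' j i
    = 8 * ((kdelta (block_of i) (block_of i) + kdelta (block_of j) (block_of j)) * X' i j
        + kdelta (block_of j) (block_of j) * mmul n L X i j
        - kdelta (block_of i) (block_of i) * mmul n X L i j)"
proof -
  have Lj: "L j r = - L r j" and Xj: "X j r = - X r j" and Xi: "X r i = - X i r" if "r < n" for r
    using X(2) L(2) ij that unfolding skew_mat_def by blast+
  have "(\<Sum>r<n. X i r * L j r) = - mmul n X L i j"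
    unfolding mmul_def sum_negf[symmetric] by (intro sum.cong refl) (simp add: Lj)
  moreover have "(\<Sum>r<n. L j r * X r i) = mmul n X L i j"
    unfolding mmul_def by (intro sum.cong refl) (simp add: Lj Xi)
  moreover have "(\<Sum>r<n. X j r * L i r) = - mmul n L X i j"
    unfolding mmul_def sum_negf[symmetric] by (intro sum.cong refl) (simp add: Xj)
  moreover have "X' j i = - X' i j"
    using X' ij unfolding skew_mat_def by blast
  ultimately show ?thesis
    using pairing_offblock[OF ij X(1) L(1), of X'] pairing_offblock[of j i, OF ij(2,1) _ X(1) L(1), of X'] ij(3)
    by (simp add: mmul_def algebra_simps)
qed

section \<open>The transport equations\<close>

definition transport_rhs :: "mat \<Rightarrow> mat \<Rightarrow> nat \<Rightarrow> nat \<Rightarrow> real" where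
  "transport_rhs L X i j = (if (\<exists>p\<in>{1..d+1}. i \<in> B p \<and> j \<in> B p) then 0
        else mmul n X L i j - mmul n L X i j)
      + (if i < ns d \<and> ns d \<le> j then (\<Sum>r<ns d. X i r * L r j + L i r * X r j)
         else if ns d \<le> i \<and> j < ns d then - (\<Sum>r<ns d. X j r * L r i + L j r * X r i)
         else 0)"

lemma transport_rhs_same_block:
  "i < n \<Longrightarrow> j < n \<Longrightarrow> block_of i = block_of j \<Longrightarrow> transport_rhs L X i j = 0"
  unfolding transport_rhs_def using same_blk_iff[of i j] less_ns_d_iff[of i] less_ns_d_iff[of j] by auto

lemma sum_less_ns_d_last_block:
  assumes "b < n" "block_of b = d + 1" "diag_blocks_zero X" "diag_blocks_zero L"
  shows "(\<Sum>r<ns d. X a r * L r b + L a r * X r b) = (\<Sum>r<n. X a r * L r b + L a r * X r b)"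
proof (rule sum.mono_neutral_left)
  show "\<forall>r\<in>{..<n} - {..<ns d}. X a r * L r b + L a r * X r b = 0"
  proof
    fix r assume "r \<in> {..<n} - {..<ns d}"
    then have "r < n" "block_of r = block_of b"
      using less_ns_d_iff[of r] block_of[of r] assms(2) by fastforce+
    then show "X a r * L r b + L a r * X r b = 0"
      using assms unfolding diag_blocks_zero_def by simp
  qed
qed (use ns_last in auto)

text \<open>Off the diagonal blocks at most one of \<open>i, j\<close> lies in the last block, so the
  factor on the left is \<open>1\<close> or \<open>2\<close>.\<close>

lemma transport_rhs_offblock:
  assumes ij: "i < n" "j < n" "block_of i \<noteq> block_of j"
    and X: "diag_blocks_zero X" "skew_mat n X" and L: "diag_blocks_zero L" "skew_mat n L"
  shows "(kdelta (block_of i) (block_of i) + kdelta (block_of j) (block_of j)) * transport_rhs L X i j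
    = 2 * (kdelta (block_of i) (block_of i) * mmul n X L i j - kdelta (block_of j) (block_of j) * mmul n L X i j)"
proof -
  have bi: "block_of i \<in> {1..d+1}" "block_of j \<in> {1..d+1}"
    using block_of ij by auto
  have rhs: "transport_rhs L X i j = mmul n X L i j - mmul n L X i j
      + (if i < ns d \<and> ns d \<le> j then (\<Sum>r<ns d. X i r * L r j + L i r * X r j)
         else if ns d \<le> i \<and> j < ns d then - (\<Sum>r<ns d. X j r * L r i + L j r * X r i)
         else 0)"
  proof -
    have "\<not> (\<exists>p\<in>{1..d+1}. i \<in> B p \<and> j \<in> B p)"
      using same_blk_iff[OF ij(1,2)] ij(3) by blast
    then show ?thesis
      unfolding transport_rhs_def by (simp only: if_False)
  qed
  consider "block_of i \<le> d" "block_of j \<le> d" | "block_of i \<le> d" "block_of j = d + 1"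
    | "block_of i = d + 1" "block_of j \<le> d"
    using bi ij(3) by fastforce
  then show ?thesis
  proof cases
    case 1
    then have "i < ns d" "j < ns d"
      using less_ns_d_iff[OF ij(1)] less_ns_d_iff[OF ij(2)] by auto
    with 1 show ?thesis
      using bi by (simp add: rhs kdelta_def)
  next
    case 2
    then have "i < ns d" "ns d \<le> j"
      using less_ns_d_iff[OF ij(1)] less_ns_d_iff[OF ij(2)] by auto
    with 2 show ?thesis
      using bi sum_less_ns_d_last_block[of j X L i] ij X(1) L(1)
      by (simp add: rhs kdelta_def mmul_def sum.distrib)
  next
    case 3
    have Xj: "X j r = - X r j" and Xi: "X r i = - X i r" and Lj: "L j r = - L r j"
      and Li: "L r i = - L i r" if "r < n" for r
      using X(2) L(2) ij that unfolding skew_mat_def by blast+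
    have "(\<Sum>r<ns d. X j r * L r i + L j r * X r i) = (\<Sum>r<n. X j r * L r i + L j r * X r i)"
      using sum_less_ns_d_last_block[of i X L j] ij 3 X(1) L(1) by simp
    also have "\<dots> = mmul n L X i j + mmul n X L i j"
      unfolding mmul_def sum.distrib[symmetric] by (intro sum.cong refl) (simp add: Xj Xi Lj Li)
    moreover have "ns d \<le> i" "j < ns d"
      using 3 less_ns_d_iff[OF ij(1)] less_ns_d_iff[OF ij(2)] by auto
    ultimately show ?thesis
      using 3 bi by (simp add: rhs kdelta_def)
  qed
qed

lemma pairing_sym_iff:
  assumes ij: "i < n" "j < n" "block_of i \<noteq> block_of j"
    and X: "diag_blocks_zero X" "skew_mat n X" and L: "diag_blocks_zero L" "skew_mat n L"
    and X': "skew_mat n X'"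
  shows "pairing L X X' i j = pairing L X X' j i \<longleftrightarrow> 2 * X' i j = transport_rhs L X i j"
proof -
  define c where "c = kdelta (block_of i) (block_of i) + kdelta (block_of j) (block_of j)"
  have "c \<noteq> 0"
    using block_of[OF ij(1)] block_of[OF ij(2)] ij(3) by (auto simp: c_def kdelta_def)
  have "pairing L X X' i j = pairing L X X' j i \<longleftrightarrow> c * (2 * X' i j) = c * transport_rhs L X i j"
    using pairing_antisym[OF ij X L X'] transport_rhs_offblock[OF ij X L]
    unfolding c_def by (auto simp: algebra_simps)
  with \<open>c \<noteq> 0\<close> show ?thesis
    by simp
qed

lemma pairing_sym_iff_matrix_equation:
  assumes X: "diag_blocks_zero X" "skew_mat n X" and L: "diag_blocks_zero L" "skew_mat n L"
    and X': "diag_blocks_zero X'" "skew_mat n X'"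
  shows "(\<forall>i<n. \<forall>j<n. block_of i \<noteq> block_of j \<longrightarrow> pairing L X X' i j = pairing L X X' j i)
    \<longleftrightarrow> (\<forall>i<n. \<forall>j<n. 2 * X' i j = transport_rhs L X i j)"
proof -
  have "2 * X' i j = transport_rhs L X i j" if "i < n" "j < n" "block_of i = block_of j" for i j
    using that X'(1) transport_rhs_same_block unfolding diag_blocks_zero_def by simp
  then show ?thesis
    using pairing_sym_iff[OF _ _ _ X L X'(2)] by metis
qed

lemma block_equation_iff:
  assumes kq: "1 \<le> k" "k < q" "q \<le> d + 1" and i: "i \<in> B k" and j: "j \<in> B q"
    and X: "diag_blocks_zero X" and L: "diag_blocks_zero L"
  shows "- 2 * X' i j
          + (\<Sum>s\<in>{1..d+1} - {k, q}. \<Sum>r\<in>B s. X i r * L r j - L i r * X r j)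
          + (if q = d + 1 then (\<Sum>l\<in>{1..d} - {k}. \<Sum>r\<in>B l. X i r * L r j + L i r * X r j) else 0) = 0
     \<longleftrightarrow> 2 * X' i j = transport_rhs L X i j"
proof -
  have kq': "k \<in> {1..d+1}" "q \<in> {1..d+1}"
    using kq by auto
  have ij: "i < n" "j < n" and bi: "block_of i = k" "block_of j = q"
    using blk_less_n block_of_eqI kq' i j by auto
  have zero_k: "X i r = 0" "L i r = 0" if "r \<in> B k" for r
    using X L that block_of_eqI[OF kq'(1) that] blk_less_n[OF kq'(1) that] ij bi
    unfolding diag_blocks_zero_def by auto
  have zero_q: "X r j = 0" "L r j = 0" if "r \<in> B q" for r
    using X L that block_of_eqI[OF kq'(2) that] blk_less_n[OF kq'(2) that] ij bi
    unfolding diag_blocks_zero_def by auto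
  have "(\<Sum>s\<in>{1..d+1} - {k, q}. \<Sum>r\<in>B s. X i r * L r j - L i r * X r j)
      = (\<Sum>s\<in>{1..d+1}. \<Sum>r\<in>B s. X i r * L r j - L i r * X r j)"
    by (rule sum_blocks_diff) (auto simp: zero_k zero_q)
  also have "\<dots> = mmul n X L i j - mmul n L X i j"
    unfolding sum_all_blocks by (simp add: mmul_def sum_subtractf)
  finally have comm: "(\<Sum>s\<in>{1..d+1} - {k, q}. \<Sum>r\<in>B s. X i r * L r j - L i r * X r j)
      = mmul n X L i j - mmul n L X i j" .
  have offblock: "\<not> (\<exists>p\<in>{1..d+1}. i \<in> B p \<and> j \<in> B p)"
    using same_blk_iff[OF ij] bi kq by auto
  have "i < ns d"
    using less_ns_d_iff[OF ij(1)] bi kq by auto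
  show ?thesis
  proof (cases "q = d + 1")
    case True
    have "(\<Sum>l\<in>{1..d} - {k}. \<Sum>r\<in>B l. X i r * L r j + L i r * X r j)
        = (\<Sum>l\<in>{1..d}. \<Sum>r\<in>B l. X i r * L r j + L i r * X r j)"
      by (rule sum_blocks_diff) (auto simp: zero_k)
    also have "\<dots> = (\<Sum>r<ns d. X i r * L r j + L i r * X r j)"
      by (rule sum_first_blocks)
    finally have "(\<Sum>l\<in>{1..d} - {k}. \<Sum>r\<in>B l. X i r * L r j + L i r * X r j)
        = (\<Sum>r<ns d. X i r * L r j + L i r * X r j)" .
    moreover have "ns d \<le> j"
      using less_ns_d_iff[OF ij(2)] bi True by simp
    ultimately show ?thesis
      unfolding comm transport_rhs_def if_not_P[OF offblock] using True \<open>i < ns d\<close> by auto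
  next
    case False
    then have "j < ns d"
      using less_ns_d_iff[OF ij(2)] bi kq by simp
    with False show ?thesis
      unfolding comm transport_rhs_def if_not_P[OF offblock] using \<open>i < ns d\<close> by auto
  qed
qed

lemma pairing_sym_iff_block_equations:
  assumes X: "diag_blocks_zero X" "skew_mat n X" and L: "diag_blocks_zero L" "skew_mat n L"
    and X': "skew_mat n X'"
  shows "(\<forall>i<n. \<forall>j<n. block_of i \<noteq> block_of j \<longrightarrow> pairing L X X' i j = pairing L X X' j i)
    \<longleftrightarrow> (\<forall>k q. 1 \<le> k \<and> k < q \<and> q \<le> d + 1 \<longrightarrow> (\<forall>i\<in>B k. \<forall>j\<in>B q.
          - 2 * X' i j
          + (\<Sum>s\<in>{1..d+1} - {k, q}. \<Sum>r\<in>B s. X i r * L r j - L i r * X r j)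
          + (if q = d + 1 then (\<Sum>l\<in>{1..d} - {k}. \<Sum>r\<in>B l. X i r * L r j + L i r * X r j) else 0) = 0))"
    (is "?sym \<longleftrightarrow> ?eqs")
proof
  assume ?sym
  show ?eqs
  proof (intro allI impI ballI)
    fix k q i j assume kq: "1 \<le> k \<and> k < q \<and> q \<le> d + 1" and i: "i \<in> B k" and j: "j \<in> B q"
    then have "k \<in> {1..d+1}" "q \<in> {1..d+1}"
      by auto
    then have "i < n" "j < n" "block_of i \<noteq> block_of j"
      using blk_less_n[of k i] blk_less_n[of q j] block_of_eqI[of k i] block_of_eqI[of q j] i j kq by auto
    with \<open>?sym\<close> have "2 * X' i j = transport_rhs L X i j"
      using pairing_sym_iff[OF _ _ _ X L X'] by blast
    then show "- 2 * X' i j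
          + (\<Sum>s\<in>{1..d+1} - {k, q}. \<Sum>r\<in>B s. X i r * L r j - L i r * X r j)
          + (if q = d + 1 then (\<Sum>l\<in>{1..d} - {k}. \<Sum>r\<in>B l. X i r * L r j + L i r * X r j) else 0) = 0"
      using block_equation_iff[of k q i j X L X'] kq i j X(1) L(1) by blast
  qed
next
  assume ?eqs
  have "pairing L X X' i j = pairing L X X' j i"
    if ij: "i < n" "j < n" "block_of i < block_of j" for i j
  proof -
    have "1 \<le> block_of i" "block_of j \<le> d + 1" "i \<in> B (block_of i)" "j \<in> B (block_of j)"
      using block_of ij(1,2) by auto
    with \<open>?eqs\<close> ij(3) have "2 * X' i j = transport_rhs L X i j"
      using block_equation_iff[OF _ ij(3) _ _ _ X(1) L(1)] by blast
    then show ?thesis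
      using pairing_sym_iff[OF ij(1,2) _ X L X'] ij(3) by simp
  qed
  then show ?sym
    by (metis linorder_neqE_nat)
qed

end

locale flag_curve = flag_blocks +
  fixes V V' X X' :: "real \<Rightarrow> mat"
  assumes V_orth: "\<forall>t. orthogonal_mat n (V t)"
    and V_deriv: "\<forall>t. mat_deriv n V (V' t) t"
    and Lam_blk: "\<forall>t. \<forall>k\<in>{1..d+1}. \<forall>i\<in>blk ns d n k. \<forall>j\<in>blk ns d n k.
                    mmul n (mtr (V t)) (V' t) i j = 0"
    and X_skew: "\<forall>t. skew_mat n (X t)"
    and X_deriv: "\<forall>t. mat_deriv n X (X' t) t"
    and X_blk: "\<forall>t. \<forall>k\<in>{1..d+1}. \<forall>i\<in>blk ns d n k. \<forall>j\<in>blk ns d n k. X t i j = 0"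
begin

abbreviation Lam :: "real \<Rightarrow> mat" where
  "Lam t \<equiv> mmul n (mtr (V t)) (V' t)"

abbreviation c :: "real \<Rightarrow> mtup" where
  "c \<equiv> \<lambda>t k. mmul n (mmul n (V t) (J k)) (mtr (V t))"

abbreviation Y :: "real \<Rightarrow> mtup" where
  "Y \<equiv> \<lambda>t k. mmul n (mmul n (V t) (\<lambda>i j. mmul n (X t) (J k) i j - mmul n (J k) (X t) i j)) (mtr (V t))"

abbreviation pairing_sym :: "real \<Rightarrow> bool" where
  "pairing_sym t \<equiv> \<forall>i<n. \<forall>j<n. block_of i \<noteq> block_of j \<longrightarrow>
     pairing (Lam t) (X t) (X' t) i j = pairing (Lam t) (X t) (X' t) j i"

lemma Lam_skew: "skew_mat n (Lam t)"
  using orthogonal_curve_skew[OF V_orth V_deriv[rule_format]] .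

lemma Lam_diag_blocks_zero: "diag_blocks_zero (Lam t)"
  using Lam_blk by (simp add: diag_blocks_zero_iff)

lemma X_diag_blocks_zero: "diag_blocks_zero (X t)"
  using X_blk by (simp add: diag_blocks_zero_iff)

lemma X'_skew: "skew_mat n (X' t)"
  using mat_deriv_skew[OF X_skew X_deriv[rule_format]] .

lemma X'_diag_blocks_zero: "diag_blocks_zero (X' t)"
  using mat_deriv_zero_entry[OF X_deriv[rule_format]] X_diag_blocks_zero
  unfolding diag_blocks_zero_def by blast

definition Y' :: "real \<Rightarrow> mtup" where
  "Y' t k = mmul n (mmul n (V' t) (jcomm (X t) k) + mmul n (V t) (jcomm (X' t) k)) (mtr (V t))
      + mmul n (mmul n (V t) (jcomm (X t) k)) (mtr (V' t))"

lemma Y_deriv: "tup_deriv n d Y (Y' t) t"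
  unfolding tup_deriv_iff Y'_def
  using mat_deriv_conj[OF V_deriv[rule_format] mat_deriv_jcomm[OF X_deriv[rule_format]]]
  by (simp add: jcomm_def fun_diff_def)

lemma parallel_along_iff_pairing_sym: "parallel_along ns d n c Y \<longleftrightarrow> (\<forall>t. pairing_sym t)"
proof -
  have "(\<exists>D. tup_deriv n d Y D t \<and> (\<forall>W\<in>flag_tangent ns d n (c t). frob n d D W = 0)) \<longleftrightarrow> pairing_sym t"
    for t
  proof -
    define D where "D = Y' t"
    have D_deriv: "tup_deriv n d Y D t"
      unfolding D_def by (rule Y_deriv)
    have frob_eq: "frob n d D' W = frob n d D W" if D': "tup_deriv n d Y D' t" for D' W
    proof -
      have "D' k i j = D k i j" if "k \<in> {1..d}" "i < n" "j < n" for k i j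
        using D_deriv D' that unfolding tup_deriv_def by (meson DERIV_unique)
      then show ?thesis
        unfolding frob_def by (intro sum.cong refl) auto
    qed
    have "(\<exists>D'. tup_deriv n d Y D' t \<and> (\<forall>W\<in>flag_tangent ns d n (c t). frob n d D' W = 0))
        \<longleftrightarrow> (\<forall>W\<in>flag_tangent ns d n (c t). frob n d D W = 0)"
    proof
      assume "\<exists>D'. tup_deriv n d Y D' t \<and> (\<forall>W\<in>flag_tangent ns d n (c t). frob n d D' W = 0)"
      then obtain D' where "tup_deriv n d Y D' t" "\<forall>W\<in>flag_tangent ns d n (c t). frob n d D' W = 0"
        by blast
      then show "\<forall>W\<in>flag_tangent ns d n (c t). frob n d D W = 0"
        by (simp add: frob_eq)
    qed (use D_deriv in blast)
    also have "\<dots> \<longleftrightarrow> pairing_sym t"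
    proof (rule orthogonal_to_flag_tangent_iff[OF V_orth[rule_format]])
      show "\<forall>k\<in>{1..d}. mat_eq n (in_frame n (V t) (D k)) (frame_deriv (Lam t) (X t) (X' t) k)"
        unfolding D_def Y'_def frame_deriv_def using in_frame_conj_deriv[OF V_orth[rule_format]] by blast
    qed
    finally show ?thesis .
  qed
  then show ?thesis
    unfolding parallel_along_def by blast
qed

end

theorem propositionA3:
  fixes n d :: nat and ns :: "nat \<Rightarrow> nat"
    and V V' X X' :: "real \<Rightarrow> nat \<Rightarrow> nat \<Rightarrow> real"
  assumes d_pos: "d \<ge> 1"
    and ns_first: "0 < ns 1" and ns_mono: "\<forall>k. 1 \<le> k \<and> k < d \<longrightarrow> ns k < ns (Suc k)"
    and ns_last: "ns d < n"
    and V_orth: "\<forall>t. orthogonal_mat n (V t)"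
    and V_deriv: "\<forall>t. mat_deriv n V (V' t) t"
    and Lam_blk: "\<forall>t. \<forall>k\<in>{1..d+1}. \<forall>i\<in>blk ns d n k. \<forall>j\<in>blk ns d n k.
                    mmul n (mtr (V t)) (V' t) i j = 0"
    and X_skew: "\<forall>t. skew_mat n (X t)"
    and X_deriv: "\<forall>t. mat_deriv n X (X' t) t"
    and X_blk: "\<forall>t. \<forall>k\<in>{1..d+1}. \<forall>i\<in>blk ns d n k. \<forall>j\<in>blk ns d n k. X t i j = 0"
  shows "let Lam = (\<lambda>t. mmul n (mtr (V t)) (V' t));
             J = Jmat ns d n;
             B = blk ns d n;
             N = ns d;
             c = (\<lambda>t k. mmul n (mmul n (V t) (J k)) (mtr (V t)));
             Y = (\<lambda>t k. mmul n (mmul n (V t)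
                    (\<lambda>i j. mmul n (X t) (J k) i j - mmul n (J k) (X t) i j)) (mtr (V t)))
         in (parallel_along ns d n c Y \<longleftrightarrow>
              (\<forall>t. \<forall>k q. 1 \<le> k \<and> k < q \<and> q \<le> d + 1 \<longrightarrow>
                 (\<forall>i\<in>B k. \<forall>j\<in>B q.
                    - 2 * X' t i j
                    + (\<Sum>s\<in>{1..d+1} - {k, q}. \<Sum>r\<in>B s.
                          X t i r * Lam t r j - Lam t i r * X t r j)
                    + (if q = d + 1 then
                         (\<Sum>l\<in>{1..d} - {k}. \<Sum>r\<in>B l.
                            X t i r * Lam t r (j) + Lam t i r * X t r j)
                       else 0) = 0)))
          \<and> (parallel_along ns d n c Y \<longleftrightarrow>
              (\<forall>t. \<forall>i<n. \<forall>j<n.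
                 2 * X' t i j =
                   (if (\<exists>p\<in>{1..d+1}. i \<in> B p \<and> j \<in> B p) then 0
                    else mmul n (X t) (Lam t) i j - mmul n (Lam t) (X t) i j)
                   + (if i < N \<and> N \<le> j then
                        (\<Sum>r<N. X t i r * Lam t r j + Lam t i r * X t r j)
                      else if N \<le> i \<and> j < N then
                        - (\<Sum>r<N. X t j r * Lam t r i + Lam t j r * X t r i)
                      else 0)))"
proof -
  interpret flag_curve n d ns V V' X X'
    by unfold_locales (use assms in auto)
  note block_facts = X_diag_blocks_zero X_skew[rule_format] Lam_diag_blocks_zero Lam_skew
  show ?thesis
    unfolding Let_def parallel_along_iff_pairing_sym
    by (intro conjI)
      (simp only: pairing_sym_iff_block_equations[OF block_facts X'_skew],
       simp only: pairing_sym_iff_matrix_equation[OF block_facts X'_diag_blocks_zero X'_skew] transport_rhs_def)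
qed

end
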